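(* Consider the closed-loop system $\dot p_i=\mathrm{sat}(v_i^{\mathrm{ms}}(\mathbf p)+v_i^{\mathrm{cv}}(\mathbf p))$, $i=1,\dots,n$, defined in the context (i.e., with every robot using the true masses $P_k(\mathbf p)$). Then from any initial state $\mathbf p(t_0)\in\mathbb{R}^{dn}$, the solution $\mathbf p(t)$ converges to the set $\mathcal{D}=\{\mathbf p\in\mathbb{R}^{dn}:\nabla_{\mathbf p}F(\mathbf p)=0\}$ as $t\to\infty$.
   Context: Setting: $n\ge2$ robots in $\mathbb{R}^d$, positions $p_i\in\mathbb{R}^d$, configuration $\mathbf p=[p_1^\top,\dots,p_n^\top]^\top\in\mathbb{R}^{dn}$; fixed sample points $q_1,\dots,q_m\in\mathbb{R}^d$; constants $\beta>0$, $\sigma_1>0$, $\sigma_2>0$, $\varepsilon\in(0,1)$, $r_{\mathrm{avoid}}>0$, $v_{\max}>0$. Mass: $P_k(\mathbf p)=\frac1n\sum_{i=1}^n e^{-\beta\|q_k-p_i\|^2}$. Error metric: $F(\mathbf p)=F_{\max}(\mathbf p)+F_{\mathrm{uni}}(\mathbf p)$ with $F_{\max}=-\ln\sqrt{\sum_{k=1}^mP_k^2}$ and $F_{\mathrm{uni}}=-\frac1m\sum_{k=1}^m\ln\sqrt{mP_k^2/\sum_{l=1}^mP_l^2}$. Meanshift command: $v_i^{\mathrm{ms}}(\mathbf p)=\dfrac{\frac{\sigma_1}{m}\sum_{k=1}^m P_k(\mathbf p)^{-1}e^{-\beta\|q_k-p_i\|^2}(q_k-p_i)}{\sum_{k=1}^m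 P_k(\mathbf p)^{-1}e^{-\beta\|q_k-p_i\|^2}}$. Repulsive term: $\tilde v_i^{\mathrm{cv}}=\sigma_2\sum_{j\ne i,\ \|p_i-p_j\|\le r_{\mathrm{avoid}}}\frac{r_{\mathrm{avoid}}-\|p_i-p_j\|}{\|p_i-p_j\|+\varepsilon}(p_i-p_j)$. With $\varphi=\min\{\|v_i^{\mathrm{ms}}\|^2/\varepsilon,1\}$, the gain is $\kappa_2=\varphi$ if $(v_i^{\mathrm{ms}})^\top\tilde v_i^{\mathrm{cv}}\ge0$ and $\kappa_2=\varphi\min\{-(1-\varepsilon)\|v_i^{\mathrm{ms}}\|^2/((v_i^{\mathrm{ms}})^\top\tilde v_i^{\mathrm{cv}}),1\}$ if $(v_i^{\mathrm{ms}})^\top\tilde v_i^{\mathrm{cv}}<0$; collision-avoidance command $v_i^{\mathrm{cv}}=\kappa_2\tilde v_i^{\mathrm{cv}}$. Saturation: $\mathrm{sat}(z)=v_{\max}z/\|z\|$ if $\|z\|>v_{\max}$, and $\mathrm{sat}(z)=z$ otherwise. *)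

theory Defs
  imports "HOL-Analysis.Analysis"
begin

text \<open>Robots are indexed by a finite type 'n (n = CARD('n)), sample points by a
finite type 'k (m = CARD('k)); positions live in real^'d, and a configuration
x :: (real^'d)^'n is the stacked vector p in R^(dn) (with its Euclidean norm).\<close>

definition mass :: "real \<Rightarrow> ('k \<Rightarrow> real^'d) \<Rightarrow> (real^'d)^'n::finite \<Rightarrow> 'k \<Rightarrow> real" where
  "mass \<beta> q x k = (1 / real CARD('n)) * (\<Sum>i\<in>UNIV. exp (- \<beta> * (norm (q k - x$i))\<^sup>2))"

definition F_max :: "real \<Rightarrow> ('k::finite \<Rightarrow> real^'d) \<Rightarrow> (real^'d)^'n::finite \<Rightarrow> real" where
  "F_max \<beta> q x = - ln (sqrt (\<Sum>k\<in>UNIV. (mass \<beta> q x k)\<^sup>2))"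

definition F_uni :: "real \<Rightarrow> ('k::finite \<Rightarrow> real^'d) \<Rightarrow> (real^'d)^'n::finite \<Rightarrow> real" where
  "F_uni \<beta> q x = - (1 / real CARD('k)) *
     (\<Sum>k\<in>UNIV. ln (sqrt (real CARD('k) * (mass \<beta> q x k)\<^sup>2 / (\<Sum>l\<in>UNIV. (mass \<beta> q x l)\<^sup>2))))"

definition F_err :: "real \<Rightarrow> ('k::finite \<Rightarrow> real^'d) \<Rightarrow> (real^'d)^'n::finite \<Rightarrow> real" where
  "F_err \<beta> q x = F_max \<beta> q x + F_uni \<beta> q x"

definition v_ms :: "real \<Rightarrow> real \<Rightarrow> ('k::finite \<Rightarrow> real^'d) \<Rightarrow> (real^'d)^'n::finite \<Rightarrow> 'n \<Rightarrow> real^'d" where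
  "v_ms \<beta> \<sigma>1 q x i =
     (1 / (\<Sum>k\<in>UNIV. inverse (mass \<beta> q x k) * exp (- \<beta> * (norm (q k - x$i))\<^sup>2))) *\<^sub>R
     ((\<sigma>1 / real CARD('k)) *\<^sub>R
       (\<Sum>k\<in>UNIV. (inverse (mass \<beta> q x k) * exp (- \<beta> * (norm (q k - x$i))\<^sup>2)) *\<^sub>R (q k - x$i)))"

definition v_cv_tilde :: "real \<Rightarrow> real \<Rightarrow> real \<Rightarrow> (real^'d)^'n::finite \<Rightarrow> 'n \<Rightarrow> real^'d" where
  "v_cv_tilde \<sigma>2 \<epsilon> r_avoid x i =
     \<sigma>2 *\<^sub>R (\<Sum>j\<in>{j. j \<noteq> i \<and> norm (x$i - x$j) \<le> r_avoid}.
        ((r_avoid - norm (x$i - x$j)) / (norm (x$i - x$j) + \<epsilon>)) *\<^sub>R (x$i - x$j))"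

definition kappa2 :: "real \<Rightarrow> real^'d \<Rightarrow> real^'d \<Rightarrow> real" where
  "kappa2 \<epsilon> vms vt =
     (let \<phi> = min ((norm vms)\<^sup>2 / \<epsilon>) 1 in
      if vms \<bullet> vt \<ge> 0 then \<phi>
      else \<phi> * min (- (1 - \<epsilon>) * (norm vms)\<^sup>2 / (vms \<bullet> vt)) 1)"

definition v_cv :: "real \<Rightarrow> real \<Rightarrow> real \<Rightarrow> real \<Rightarrow> real \<Rightarrow> ('k::finite \<Rightarrow> real^'d) \<Rightarrow> (real^'d)^'n::finite \<Rightarrow> 'n \<Rightarrow> real^'d" where
  "v_cv \<beta> \<sigma>1 \<sigma>2 \<epsilon> r_avoid q x i =
     kappa2 \<epsilon> (v_ms \<beta> \<sigma>1 q x i) (v_cv_tilde \<sigma>2 \<epsilon> r_avoid x i) *\<^sub>R v_cv_tilde \<sigma>2 \<epsilon> r_avoid x i"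

definition sat :: "real \<Rightarrow> real^'d \<Rightarrow> real^'d" where
  "sat v_max z = (if norm z > v_max then (v_max / norm z) *\<^sub>R z else z)"

definition closed_loop :: "real \<Rightarrow> real \<Rightarrow> real \<Rightarrow> real \<Rightarrow> real \<Rightarrow> real \<Rightarrow> ('k::finite \<Rightarrow> real^'d) \<Rightarrow> (real^'d)^'n::finite \<Rightarrow> (real^'d)^'n" where
  "closed_loop \<beta> \<sigma>1 \<sigma>2 \<epsilon> r_avoid v_max q x =
     (\<chi> i. sat v_max (v_ms \<beta> \<sigma>1 q x i + v_cv \<beta> \<sigma>1 \<sigma>2 \<epsilon> r_avoid q x i))"

definition crit_set :: "real \<Rightarrow> ('k::finite \<Rightarrow> real^'d) \<Rightarrow> ((real^'d)^'n::finite) set" where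
  "crit_set \<beta> q = {x. (F_err \<beta> q has_derivative (\<lambda>h. 0)) (at x)}"

end

theory Submission
  imports Defs
begin

(* Up to a constant, F = - (1/m) * sum_k ln P_k, and the block of its gradient belonging to
   robot i is a negative multiple of the meanshift command v_i^ms. The gain kappa2 keeps
   v_i^ms . (v_i^ms + v_i^cv) >= eps |v_i^ms|^2 and saturation only shrinks a vector by a
   positive factor, so along solutions dF/dt <= - c |grad F|^2, where c > 0 depends only on
   a bound for the positions. Such a bound exists: far from the samples the meanshift pull,
   quadratic in |p_i|, beats the repulsion, which is bounded, so |p_i| cannot grow beyond a
   fixed radius. As F is bounded below and the saturated velocities make the solution
   Lipschitz, a LaSalle-type argument shows that the solution eventually stays in every
   neighbourhood of the critical set. *)

section \<open>Dissipative trajectories\<close>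

lemma DERIV_le_imp_le_affine:
  fixes f :: "real \<Rightarrow> real"
  assumes "a \<le> b" "continuous_on {a..b} f"
    and "\<And>t. a < t \<Longrightarrow> t < b \<Longrightarrow> (f has_real_derivative f' t) (at t)"
    and "\<And>t. a < t \<Longrightarrow> t < b \<Longrightarrow> f' t \<le> c"
  shows "f b \<le> f a + c * (b - a)"
proof -
  have "f b - c * b \<le> f a - c * a"
  proof (rule DERIV_nonpos_imp_decreasing_open[OF assms(1)])
    fix t assume "a < t" "t < b"
    then have "((\<lambda>t. f t - c * t) has_real_derivative f' t - c) (at t)"
      using assms(3) by (auto intro!: derivative_eq_intros)
    then show "\<exists>y. ((\<lambda>t. f t - c * t) has_real_derivative y) (at t) \<and> y \<le> 0"
      using assms(4) \<open>a < t\<close> \<open>t < b\<close> by force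
  qed (use assms(2) in \<open>auto intro!: continuous_intros\<close>)
  then show ?thesis
    by (simp add: algebra_simps)
qed

lemma le_max_if_DERIV_nonpos_above:
  fixes g :: "real \<Rightarrow> real"
  assumes cont: "continuous_on {t0..} g"
    and deriv: "\<And>t. t0 < t \<Longrightarrow> (g has_real_derivative g' t) (at t)"
    and nonpos: "\<And>t. t0 < t \<Longrightarrow> B < g t \<Longrightarrow> g' t \<le> 0"
    and "t0 \<le> t"
  shows "g t \<le> max (g t0) B"
proof (rule ccontr)
  define M where "M = max (g t0) B"
  assume "\<not> g t \<le> max (g t0) B"
  then have gt: "M < g t"
    unfolding M_def by linarith
  define S where "S = {t0..t} \<inter> g -` {..M}"
  have "closed S"
    unfolding S_def by (rule continuous_closed_preimage) (auto intro: continuous_on_subset[OF cont])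
  then have "compact S"
    by (simp add: compact_eq_bounded_closed S_def bounded_Int)
  moreover have "t0 \<in> S"
    using \<open>t0 \<le> t\<close> by (simp add: S_def M_def)
  ultimately obtain s where s: "s \<in> S" and s_max: "\<forall>s'\<in>S. s' \<le> s"
    using compact_attains_sup by (metis empty_iff)
  have s_range: "t0 \<le> s" "s \<le> t" "g s \<le> M"
    using s by (auto simp: S_def)
  have "g t \<le> g s + 0 * (t - s)"
  proof (rule DERIV_le_imp_le_affine)
    show "s \<le> t" "continuous_on {s..t} g"
      using s_range by (auto intro: continuous_on_subset[OF cont])
    fix y assume y: "s < y" "y < t"
    then have "y \<notin> S"
      using s_max not_le by blast
    then have "B < g y"
      using y s_range by (auto simp: S_def M_def)
    then show "g' y \<le> 0" "(g has_real_derivative g' y) (at y)"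
      using y s_range nonpos deriv by auto
  qed
  then show False
    using s_range gt by simp
qed

lemma compact_pos_imp_uniform_lower_bound:
  fixes h :: "'a::topological_space \<Rightarrow> real"
  assumes "compact K" "continuous_on K h" "\<And>z. z \<in> K \<Longrightarrow> 0 < h z"
  obtains \<delta> where "0 < \<delta>" "\<And>z. z \<in> K \<Longrightarrow> \<delta> \<le> h z"
proof (cases "K = {}")
  case False
  then obtain z0 where "z0 \<in> K" "\<And>z. z \<in> K \<Longrightarrow> h z0 \<le> h z"
    using continuous_attains_inf[OF assms(1) _ assms(2)] by blast
  with assms(3) that show ?thesis
    by blast
qed (use that[of 1] in simp)

lemma uniformly_positive_away_from_zeros:
  fixes h :: "'a::heine_borel \<Rightarrow> real"
  assumes "bounded S" "continuous_on UNIV h" "\<And>y. 0 \<le> h y" "0 < d"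
  obtains \<delta> where "0 < \<delta>"
    and "\<And>z. z \<in> closure S \<Longrightarrow> (\<And>y. h y = 0 \<Longrightarrow> d \<le> dist z y) \<Longrightarrow> \<delta> \<le> h z"
proof -
  define K where "K = closure S \<inter> (\<Inter>y\<in>{y. h y = 0}. {z. d \<le> dist z y})"
  have "closed {z. d \<le> dist z y}" for y
    by (intro closed_Collect_le continuous_intros)
  then have "compact K"
    unfolding K_def using assms(1) by (intro compact_Int_closed closed_INT) auto
  moreover have "0 < h z" if "z \<in> K" for z
  proof (rule ccontr)
    assume "\<not> 0 < h z"
    then have "d \<le> dist z z"
      using that assms(3)[of z] by (auto simp: K_def)
    then show False
      using assms(4) by simp
  qed
  ultimately obtain \<delta> where "0 < \<delta>" "\<And>z. z \<in> K \<Longrightarrow> \<delta> \<le> h z"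
    using compact_pos_imp_uniform_lower_bound continuous_on_subset[OF assms(2)] by blast
  then show ?thesis
    using that by (auto simp: K_def)
qed

lemma DERIV_nonpos_bdd_below_imp_eventually_small_drop:
  fixes f :: "real \<Rightarrow> real"
  assumes cont: "continuous_on {t0..} f"
    and deriv: "\<And>t. t0 < t \<Longrightarrow> (f has_real_derivative f' t) (at t)"
    and nonpos: "\<And>t. t0 < t \<Longrightarrow> f' t \<le> 0"
    and below: "bdd_below (f ` {t0..})"
    and "0 < \<eta>"
  obtains T where "t0 \<le> T" "\<And>s t. T \<le> s \<Longrightarrow> s \<le> t \<Longrightarrow> f s - f t < \<eta>"
proof -
  have decreasing: "f t \<le> f s" if "t0 \<le> s" "s \<le> t" for s t
    using DERIV_le_imp_le_affine[of s t f f' 0] that deriv nonpos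
      continuous_on_subset[OF cont, of "{s..t}"] by auto
  obtain T where T: "t0 \<le> T" "f T < Inf (f ` {t0..}) + \<eta>"
    using cInf_lessD[of "f ` {t0..}" "Inf (f ` {t0..}) + \<eta>"] \<open>0 < \<eta>\<close> by auto
  have "f s - f t < \<eta>" if "T \<le> s" "s \<le> t" for s t
    using decreasing[of T s] cInf_lower[OF _ below, of "f t"] T that by auto
  with T(1) show ?thesis
    using that by blast
qed

text \<open>A trajectory that stayed \<open>e\<close>-far from the zeros of \<open>h\<close> would, by the Lipschitz bound,
  stay \<open>e/2\<close>-far during a window of fixed length, where \<open>h\<close> is uniformly positive; so \<open>f\<close>
  would drop by a fixed amount, which is impossible once \<open>f\<close> is close to its infimum.\<close>

lemma eventually_near_zeros_of_dissipation:
  fixes x :: "real \<Rightarrow> 'a::heine_borel" and f :: "real \<Rightarrow> real" and h :: "'a \<Rightarrow> real"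
  assumes lip: "L-lipschitz_on {t0..} x"
    and bounded: "bounded (x ` {t0..})"
    and f_cont: "continuous_on {t0..} f"
    and f_deriv: "\<And>t. t0 < t \<Longrightarrow> (f has_real_derivative f' t) (at t)"
    and dissipation: "\<And>t. t0 < t \<Longrightarrow> f' t \<le> - h (x t)"
    and f_below: "bdd_below (f ` {t0..})"
    and h_cont: "continuous_on UNIV h"
    and h_nonneg: "\<And>y. 0 \<le> h y"
    and "0 < e"
  shows "\<forall>\<^sub>F t in at_top. \<exists>y. h y = 0 \<and> dist (x t) y < e"
proof -
  obtain \<delta> where \<delta>: "0 < \<delta>" "\<And>z. z \<in> closure (x ` {t0..}) \<Longrightarrow>
      (\<And>y. h y = 0 \<Longrightarrow> e / 2 \<le> dist z y) \<Longrightarrow> \<delta> \<le> h z"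
    using uniformly_positive_away_from_zeros[OF bounded h_cont h_nonneg, of "e / 2"] \<open>0 < e\<close> by auto
  define \<tau> where "\<tau> = e / (2 * (L + 1))"
  have L: "0 \<le> L"
    using lipschitz_on_nonneg[OF lip] .
  have \<tau>: "0 < \<tau>" "L * \<tau> \<le> e / 2"
    using L \<open>0 < e\<close> by (auto simp: \<tau>_def field_simps)
  obtain T where T: "t0 \<le> T" "\<And>s t. T \<le> s \<Longrightarrow> s \<le> t \<Longrightarrow> f s - f t < \<delta> * \<tau>"
  proof (rule DERIV_nonpos_bdd_below_imp_eventually_small_drop[where \<eta> = "\<delta> * \<tau>", OF f_cont f_deriv _ f_below])
    show "f' t \<le> 0" if "t0 < t" for t
      using dissipation[OF that] h_nonneg[of "x t"] by linarith
  qed (use \<delta>(1) \<tau>(1) in auto)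
  have "\<exists>y. h y = 0 \<and> dist (x t) y < e" if "T \<le> t" for t
  proof (rule ccontr)
    assume "\<nexists>y. h y = 0 \<and> dist (x t) y < e"
    then have far: "e \<le> dist (x t) y" if "h y = 0" for y
      using that by (meson not_le)
    have h_ge: "\<delta> \<le> h (x s)" if "t \<le> s" "s \<le> t + \<tau>" for s
    proof (rule \<delta>(2))
      show "x s \<in> closure (x ` {t0..})"
        using that \<open>T \<le> t\<close> T(1) by (intro closure_subset[THEN subsetD]) auto
      have "dist (x s) (x t) \<le> L * dist s t"
        using that \<open>T \<le> t\<close> T(1) by (intro lipschitz_onD[OF lip]) auto
      also have "\<dots> \<le> L * \<tau>"
        using that L by (intro mult_left_mono) (auto simp: dist_real_def)
      finally have "dist (x s) (x t) \<le> L * \<tau>" .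
      then show "e / 2 \<le> dist (x s) y" if "h y = 0" for y
        using far[OF that] \<tau>(2) dist_triangle[of "x t" y "x s"] by (simp add: dist_commute)
    qed
    have "f (t + \<tau>) \<le> f t + (- \<delta>) * (t + \<tau> - t)"
    proof (rule DERIV_le_imp_le_affine)
      show "t \<le> t + \<tau>" "continuous_on {t..t + \<tau>} f"
        using \<tau>(1) \<open>T \<le> t\<close> T(1) by (auto intro: continuous_on_subset[OF f_cont])
      fix s assume s: "t < s" "s < t + \<tau>"
      then have "t0 < s"
        using \<open>T \<le> t\<close> T(1) by linarith
      then show "(f has_real_derivative f' s) (at s)" "f' s \<le> - \<delta>"
        using f_deriv dissipation[of s] h_ge[of s] s by auto
    qed
    then show False
      using T(2)[OF \<open>T \<le> t\<close>, of "t + \<tau>"] \<tau>(1) by simp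
  qed
  then show ?thesis
    unfolding eventually_at_top_linorder by blast
qed

lemma has_vector_derivative_comp_has_derivative:
  fixes g :: "'a::real_normed_vector \<Rightarrow> real"
  assumes "(p has_vector_derivative v) (at t)" "(g has_derivative g') (at (p t))"
  shows "((\<lambda>t. g (p t)) has_real_derivative g' v) (at t)"
  using vector_derivative_diff_chain_within[of p v t UNIV g g', OF _ has_derivative_at_withinI] assms
  by (simp add: has_real_derivative_iff_has_vector_derivative o_def)

lemma has_derivative_norm_nth_power2:
  fixes x :: "('a::real_inner)^'n"
  shows "((\<lambda>x. (norm (x$i))\<^sup>2) has_derivative (\<lambda>h. 2 * (x$i \<bullet> h$i))) (at x)"
  unfolding power2_norm_eq_inner
  by (rule derivative_eq_intros bounded_linear.has_derivative[OF bounded_linear_vec_nth] refl)+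
     (simp add: inner_commute)

lemma norm_weighted_mean_le:
  fixes z :: "'k \<Rightarrow> 'a::real_normed_vector"
  assumes "\<And>k. k \<in> A \<Longrightarrow> 0 < w k" "\<And>k. k \<in> A \<Longrightarrow> norm (z k) \<le> B" "0 \<le> B"
  shows "norm ((1 / (\<Sum>k\<in>A. w k)) *\<^sub>R (\<Sum>k\<in>A. w k *\<^sub>R z k)) \<le> B"
proof -
  have "norm (\<Sum>k\<in>A. w k *\<^sub>R z k) \<le> (\<Sum>k\<in>A. w k * B)"
    using assms by (intro order_trans[OF norm_sum] sum_mono) (simp add: mult_left_mono less_imp_le)
  also have "\<dots> = (\<Sum>k\<in>A. w k) * B"
    by (simp add: sum_distrib_right)
  finally have "norm (\<Sum>k\<in>A. w k *\<^sub>R z k) \<le> (\<Sum>k\<in>A. w k) * B" .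
  moreover have "(\<Sum>k\<in>A. w k) \<ge> 0"
    using assms(1) by (simp add: sum_nonneg less_imp_le)
  ultimately show ?thesis
    using assms(3) by (cases "(\<Sum>k\<in>A. w k) = 0") (simp_all add: divide_le_eq mult.commute)
qed

lemma norm_vec_le_sum_norm_nth: "norm (x :: 'a::real_normed_vector^'n) \<le> (\<Sum>i\<in>UNIV. norm (x$i))"
  unfolding norm_vec_def by (rule L2_set_le_sum) auto

section \<open>The error metric and its gradient\<close>

definition gauss_kernel :: "real \<Rightarrow> ('k \<Rightarrow> real^'d) \<Rightarrow> (real^'d)^'n::finite \<Rightarrow> 'k \<Rightarrow> 'n \<Rightarrow> real" where
  "gauss_kernel \<beta> q x k i = exp (- \<beta> * (norm (q k - x$i))\<^sup>2)"

lemma gauss_kernel_pos: "gauss_kernel \<beta> q x k i > 0"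
  by (simp add: gauss_kernel_def)

lemma mass_eq_gauss_kernel_mean:
  fixes x :: "(real^'d)^'n::finite"
  shows "mass \<beta> q x k = (\<Sum>i\<in>UNIV. gauss_kernel \<beta> q x k i) / real CARD('n)"
  by (simp add: mass_def gauss_kernel_def)

lemma mass_pos: "mass \<beta> q x k > 0"
  unfolding mass_def by (intro mult_pos_pos sum_pos) auto

lemma mass_le_1:
  fixes x :: "(real^'d)^'n::finite"
  assumes "\<beta> \<ge> 0"
  shows "mass \<beta> q x k \<le> 1"
proof -
  have "(\<Sum>i\<in>UNIV. gauss_kernel \<beta> q x k i) \<le> (\<Sum>i\<in>(UNIV::'n set). 1)"
    using assms by (intro sum_mono) (simp add: gauss_kernel_def)
  then show ?thesis
    by (simp add: mass_eq_gauss_kernel_mean)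
qed

lemma gauss_kernel_le_mass:
  fixes x :: "(real^'d)^'n::finite"
  shows "gauss_kernel \<beta> q x k i \<le> real CARD('n) * mass \<beta> q x k"
  using member_le_sum[of i UNIV "gauss_kernel \<beta> q x k"]
  by (simp add: mass_eq_gauss_kernel_mean less_imp_le gauss_kernel_pos)

(* The normalisation inside F_uni cancels F_max. *)
lemma F_err_eq_mean_log_mass:
  fixes q :: "'k::finite \<Rightarrow> real^'d" and x :: "(real^'d)^'n::finite"
  shows "F_err \<beta> q x = - ln (real CARD('k)) / 2 - (\<Sum>k\<in>UNIV. ln (mass \<beta> q x k)) / real CARD('k)"
proof -
  define S where "S = (\<Sum>l\<in>UNIV. (mass \<beta> q x l)\<^sup>2)"
  define m where "m = real CARD('k)"
  have m: "m > 0"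
    by (simp add: m_def)
  have S: "S > 0"
    unfolding S_def by (intro sum_pos zero_less_power mass_pos) auto
  have F_max: "F_max \<beta> q x = - ln S / 2"
    unfolding F_max_def S_def[symmetric] using S by (simp add: ln_sqrt)
  have log_term: "ln (sqrt (m * (mass \<beta> q x k)\<^sup>2 / S)) = (ln m + 2 * ln (mass \<beta> q x k) - ln S) / 2" for k
    using m S mass_pos[of \<beta> q x k] by (simp add: ln_sqrt ln_div ln_mult ln_realpow)
  have "F_uni \<beta> q x = - (\<Sum>k\<in>UNIV. (ln m + 2 * ln (mass \<beta> q x k) - ln S) / 2) / m"
    unfolding F_uni_def S_def[symmetric] m_def[symmetric] log_term by simp
  also have "\<dots> = - ln m / 2 + ln S / 2 - (\<Sum>k\<in>UNIV. ln (mass \<beta> q x k)) / m"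
    using m by (simp add: sum_divide_distrib[symmetric] sum.distrib sum_subtractf sum_distrib_left[symmetric] m_def field_simps)
  finally show ?thesis
    unfolding F_err_def F_max m_def by simp
qed

lemma F_err_lower_bound:
  fixes q :: "'k::finite \<Rightarrow> real^'d" and x :: "(real^'d)^'n::finite"
  assumes "\<beta> \<ge> 0"
  shows "F_err \<beta> q x \<ge> - ln (real CARD('k)) / 2"
proof -
  have "(\<Sum>k\<in>UNIV. ln (mass \<beta> q x k)) \<le> 0"
    by (intro sum_nonpos) (simp add: mass_pos mass_le_1[OF assms])
  then show ?thesis
    unfolding F_err_eq_mean_log_mass by (simp add: divide_nonpos_pos)
qed

lemma gauss_kernel_has_derivative:
  fixes x :: "(real^'d)^'n::finite"
  shows "((\<lambda>x. gauss_kernel \<beta> q x k i) has_derivative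
          (\<lambda>h. 2 * \<beta> * gauss_kernel \<beta> q x k i * ((q k - x$i) \<bullet> h$i))) (at x)"
  unfolding gauss_kernel_def power2_norm_eq_inner
  by (rule derivative_eq_intros refl bounded_linear.has_derivative[OF bounded_linear_vec_nth])+
     (simp add: algebra_simps inner_commute)

lemma mass_has_derivative:
  fixes x :: "(real^'d)^'n::finite"
  shows "((\<lambda>x. mass \<beta> q x k) has_derivative
          (\<lambda>h. (\<Sum>i\<in>UNIV. 2 * \<beta> * gauss_kernel \<beta> q x k i * ((q k - x$i) \<bullet> h$i)) / real CARD('n))) (at x)"
  unfolding mass_eq_gauss_kernel_mean
  by (rule derivative_eq_intros gauss_kernel_has_derivative refl | simp)+

definition ms_weight :: "real \<Rightarrow> ('k::finite \<Rightarrow> real^'d) \<Rightarrow> (real^'d)^'n::finite \<Rightarrow> 'n \<Rightarrow> real" where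
  "ms_weight \<beta> q x i = (\<Sum>k\<in>UNIV. inverse (mass \<beta> q x k) * gauss_kernel \<beta> q x k i)"

definition grad_F :: "real \<Rightarrow> ('k::finite \<Rightarrow> real^'d) \<Rightarrow> (real^'d)^'n::finite \<Rightarrow> 'n \<Rightarrow> real^'d" where
  "grad_F \<beta> q x i = (- 2 * \<beta> / (real CARD('n) * real CARD('k))) *\<^sub>R
     (\<Sum>k\<in>UNIV. (inverse (mass \<beta> q x k) * gauss_kernel \<beta> q x k i) *\<^sub>R (q k - x$i))"

lemma F_err_has_derivative:
  fixes q :: "'k::finite \<Rightarrow> real^'d" and x :: "(real^'d)^'n::finite"
  shows "(F_err \<beta> q has_derivative (\<lambda>h. \<Sum>i\<in>UNIV. grad_F \<beta> q x i \<bullet> h$i)) (at x)"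
proof -
  define n where "n = real CARD('n)"
  define m where "m = real CARD('k)"
  define D where "D h k = (\<Sum>i\<in>UNIV. 2 * \<beta> * gauss_kernel \<beta> q x k i * ((q k - x$i) \<bullet> h$i)) / n" for h k
  have F_eq: "F_err \<beta> q = (\<lambda>x. - ln m / 2 - (\<Sum>k\<in>UNIV. ln (mass \<beta> q x k)) / m)"
    unfolding m_def by (rule ext) (rule F_err_eq_mean_log_mass)
  have deriv: "((\<lambda>x. - ln m / 2 - (\<Sum>k\<in>UNIV. ln (mass \<beta> q x k)) / m) has_derivative
      (\<lambda>h. - (\<Sum>k\<in>UNIV. D h k / mass \<beta> q x k) / m)) (at x)"
    unfolding D_def n_def using mass_pos[of \<beta> q x]
    by (auto intro!: derivative_eq_intros mass_has_derivative simp: m_def field_simps sum_divide_distrib)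
  have rhs: "- (\<Sum>k\<in>UNIV. D h k / mass \<beta> q x k) / m = (\<Sum>i\<in>UNIV. grad_F \<beta> q x i \<bullet> h$i)" for h
  proof -
    have "- (\<Sum>k\<in>UNIV. D h k / mass \<beta> q x k) / m
        = (\<Sum>k\<in>UNIV. \<Sum>i\<in>UNIV. - 2 * \<beta> / (n * m) *
             (inverse (mass \<beta> q x k) * gauss_kernel \<beta> q x k i * ((q k - x$i) \<bullet> h$i)))"
      by (simp add: D_def sum_divide_distrib sum_distrib_left sum_negf[symmetric] field_simps)
    also have "\<dots> = (\<Sum>i\<in>UNIV. grad_F \<beta> q x i \<bullet> h$i)"
      by (subst sum.swap) (simp add: grad_F_def n_def m_def inner_sum_left sum_distrib_left sum_negf mult_ac)
    finally show ?thesis .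
  qed
  show ?thesis
    using deriv unfolding F_eq rhs .
qed

lemma grad_F_zero_imp_crit_set:
  assumes "\<And>i. grad_F \<beta> q x i = 0"
  shows "x \<in> crit_set \<beta> q"
  using F_err_has_derivative[of \<beta> q x] by (simp add: assms crit_set_def)

lemma continuous_grad_F: "continuous (at x) (\<lambda>x. grad_F \<beta> q x i)"
proof -
  have "continuous (at x) (\<lambda>x. mass \<beta> q x k)" "continuous (at x) (\<lambda>x. gauss_kernel \<beta> q x k i)" for k
    by (rule has_derivative_continuous[OF mass_has_derivative]
             has_derivative_continuous[OF gauss_kernel_has_derivative])+
  then show ?thesis
    unfolding grad_F_def using mass_pos[of \<beta> q x]
    by (intro continuous_intros isCont_vec_nth) (auto simp: dual_order.strict_implies_not_eq)
qed

lemma ms_weight_pos: "ms_weight \<beta> q x i > 0"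
  unfolding ms_weight_def by (intro sum_pos mult_pos_pos) (auto simp: mass_pos gauss_kernel_pos)

lemma ms_weight_le:
  fixes q :: "'k::finite \<Rightarrow> real^'d" and x :: "(real^'d)^'n::finite"
  shows "ms_weight \<beta> q x i \<le> real CARD('k) * real CARD('n)"
proof -
  have "inverse (mass \<beta> q x k) * gauss_kernel \<beta> q x k i \<le> real CARD('n)" for k
    using gauss_kernel_le_mass[of \<beta> q x k i] mass_pos[of \<beta> q x k]
    by (simp add: field_simps)
  then have "ms_weight \<beta> q x i \<le> (\<Sum>k\<in>(UNIV::'k set). real CARD('n))"
    unfolding ms_weight_def by (intro sum_mono)
  then show ?thesis
    by simp
qed

definition ms_centroid :: "real \<Rightarrow> ('k::finite \<Rightarrow> real^'d) \<Rightarrow> (real^'d)^'n::finite \<Rightarrow> 'n \<Rightarrow> real^'d" where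
  "ms_centroid \<beta> q x i = (1 / ms_weight \<beta> q x i) *\<^sub>R
     (\<Sum>k\<in>UNIV. (inverse (mass \<beta> q x k) * gauss_kernel \<beta> q x k i) *\<^sub>R q k)"

lemma weighted_sum_diff_eq_centroid:
  fixes q :: "'k::finite \<Rightarrow> real^'d" and x :: "(real^'d)^'n::finite"
  shows "(\<Sum>k\<in>UNIV. (inverse (mass \<beta> q x k) * gauss_kernel \<beta> q x k i) *\<^sub>R (q k - x$i))
    = ms_weight \<beta> q x i *\<^sub>R (ms_centroid \<beta> q x i - x$i)"
  using ms_weight_pos[of \<beta> q x i]
  by (simp add: ms_centroid_def ms_weight_def scaleR_diff_right sum_subtractf scaleR_sum_left)

lemma v_ms_eq_centroid_diff:
  fixes q :: "'k::finite \<Rightarrow> real^'d" and x :: "(real^'d)^'n::finite"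
  shows "v_ms \<beta> \<sigma>1 q x i = (\<sigma>1 / real CARD('k)) *\<^sub>R (ms_centroid \<beta> q x i - x$i)"
proof -
  have "v_ms \<beta> \<sigma>1 q x i = (\<sigma>1 / real CARD('k)) *\<^sub>R ((1 / ms_weight \<beta> q x i) *\<^sub>R
      (\<Sum>k\<in>UNIV. (inverse (mass \<beta> q x k) * gauss_kernel \<beta> q x k i) *\<^sub>R (q k - x$i)))"
    by (simp add: v_ms_def ms_weight_def gauss_kernel_def)
  then show ?thesis
    using ms_weight_pos[of \<beta> q x i] by (simp add: weighted_sum_diff_eq_centroid)
qed

lemma grad_F_eq_scaleR_v_ms:
  fixes q :: "'k::finite \<Rightarrow> real^'d" and x :: "(real^'d)^'n::finite"
  assumes "\<sigma>1 > 0"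
  shows "grad_F \<beta> q x i = (- 2 * \<beta> * ms_weight \<beta> q x i / (real CARD('n) * \<sigma>1)) *\<^sub>R v_ms \<beta> \<sigma>1 q x i"
  unfolding grad_F_def weighted_sum_diff_eq_centroid v_ms_eq_centroid_diff
  using assms by (simp add: field_simps)

section \<open>Bounds on the controller\<close>

definition sample_radius :: "('k::finite \<Rightarrow> real^'d) \<Rightarrow> real" where
  "sample_radius q = Max (range (\<lambda>k. norm (q k)))"

lemma norm_le_sample_radius: "norm (q k) \<le> sample_radius q"
  unfolding sample_radius_def by (rule Max_ge) auto

lemma sample_radius_nonneg: "sample_radius q \<ge> 0"
  using norm_le_sample_radius[of q undefined] norm_ge_zero order_trans by blast

lemma norm_ms_centroid_le: "norm (ms_centroid \<beta> q x i) \<le> sample_radius q"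
  unfolding ms_centroid_def ms_weight_def
  by (rule norm_weighted_mean_le)
     (simp_all add: mass_pos gauss_kernel_pos norm_le_sample_radius sample_radius_nonneg)

lemma norm_v_ms_le:
  fixes q :: "'k::finite \<Rightarrow> real^'d" and x :: "(real^'d)^'n::finite"
  assumes "\<sigma>1 \<ge> 0"
  shows "norm (v_ms \<beta> \<sigma>1 q x i) \<le> \<sigma>1 / real CARD('k) * (sample_radius q + norm (x$i))"
proof -
  have "norm (ms_centroid \<beta> q x i - x$i) \<le> sample_radius q + norm (x$i)"
    using norm_triangle_ineq4 norm_ms_centroid_le add_right_mono order_trans by blast
  then show ?thesis
    unfolding v_ms_eq_centroid_diff using assms by (auto intro!: divide_right_mono mult_left_mono)
qed

lemma inner_v_ms_le:
  fixes q :: "'k::finite \<Rightarrow> real^'d" and x :: "(real^'d)^'n::finite"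
  assumes "\<sigma>1 \<ge> 0"
  shows "x$i \<bullet> v_ms \<beta> \<sigma>1 q x i \<le> \<sigma>1 / real CARD('k) * ((sample_radius q - norm (x$i)) * norm (x$i))"
proof -
  have "x$i \<bullet> ms_centroid \<beta> q x i \<le> norm (x$i) * norm (ms_centroid \<beta> q x i)"
    by (rule norm_cauchy_schwarz)
  also have "\<dots> \<le> norm (x$i) * sample_radius q"
    by (rule mult_left_mono[OF norm_ms_centroid_le norm_ge_zero])
  finally have "x$i \<bullet> (ms_centroid \<beta> q x i - x$i) \<le> (sample_radius q - norm (x$i)) * norm (x$i)"
    by (simp add: inner_diff_right algebra_simps power2_norm_eq_inner[symmetric] power2_eq_square)
  then show ?thesis
    unfolding v_ms_eq_centroid_diff inner_scaleR_right using assms by (intro mult_left_mono) auto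
qed

lemma kappa2_bounds:
  assumes "0 < \<epsilon>" "\<epsilon> < 1"
  shows "0 \<le> kappa2 \<epsilon> v w" "kappa2 \<epsilon> v w \<le> 1"
proof -
  have "0 \<le> - (1 - \<epsilon>) * (norm v)\<^sup>2 / (v \<bullet> w)" if "\<not> 0 \<le> v \<bullet> w"
    using that assms by (intro divide_nonpos_neg) (auto simp: mult_nonpos_nonneg)
  then show "0 \<le> kappa2 \<epsilon> v w" "kappa2 \<epsilon> v w \<le> 1"
    using assms by (auto simp: kappa2_def Let_def mult_le_one)
qed

lemma kappa2_mult_inner_ge:
  assumes "0 < \<epsilon>" "\<epsilon> < 1"
  shows "kappa2 \<epsilon> v w * (v \<bullet> w) \<ge> - (1 - \<epsilon>) * (norm v)\<^sup>2"
proof (cases "v \<bullet> w \<ge> 0")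
  case True
  then have "0 \<le> kappa2 \<epsilon> v w * (v \<bullet> w)"
    by (rule mult_nonneg_nonneg[OF kappa2_bounds(1)[OF assms]])
  moreover have "- (1 - \<epsilon>) * (norm v)\<^sup>2 \<le> 0"
    using assms by (intro mult_nonpos_nonneg) simp_all
  ultimately show ?thesis
    by linarith
next
  case False
  define \<phi> where "\<phi> = min ((norm v)\<^sup>2 / \<epsilon>) 1"
  define \<mu> where "\<mu> = min (- (1 - \<epsilon>) * (norm v)\<^sup>2 / (v \<bullet> w)) 1"
  have "kappa2 \<epsilon> v w = \<phi> * \<mu>"
    using False by (simp add: kappa2_def \<phi>_def[symmetric] \<mu>_def Let_def)
  have "\<mu> * (v \<bullet> w) \<ge> - (1 - \<epsilon>) * (norm v)\<^sup>2"
    using False by (simp add: \<mu>_def min_def neg_le_divide_eq)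
  moreover have "\<mu> * (v \<bullet> w) \<le> 0"
    using False assms by (simp add: \<mu>_def mult_nonpos_nonneg divide_nonpos_neg mult_nonneg_nonpos)
  then have "(1 - \<phi>) * (\<mu> * (v \<bullet> w)) \<le> 0"
    by (simp add: \<phi>_def mult_nonneg_nonpos)
  ultimately show ?thesis
    unfolding \<open>kappa2 \<epsilon> v w = \<phi> * \<mu>\<close> by (simp add: algebra_simps)
qed

lemma inner_add_kappa2_ge:
  assumes "0 < \<epsilon>" "\<epsilon> < 1"
  shows "v \<bullet> (v + kappa2 \<epsilon> v w *\<^sub>R w) \<ge> \<epsilon> * (norm v)\<^sup>2"
  using kappa2_mult_inner_ge[OF assms, of v w]
  by (simp add: inner_add_right power2_norm_eq_inner algebra_simps)

definition sat_gain :: "real \<Rightarrow> real^'d \<Rightarrow> real" where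
  "sat_gain v_max z = (if norm z > v_max then v_max / norm z else 1)"

lemma sat_eq_scaleR_sat_gain: "sat v_max z = sat_gain v_max z *\<^sub>R z"
  by (simp add: sat_def sat_gain_def)

lemma sat_gain_pos: "v_max > 0 \<Longrightarrow> sat_gain v_max z > 0"
  by (auto simp: sat_gain_def intro!: divide_pos_pos)

lemma sat_gain_ge:
  assumes "v_max > 0" "norm z \<le> U"
  shows "sat_gain v_max z \<ge> min 1 (v_max / U)"
  using assms by (auto simp: sat_gain_def intro!: divide_left_mono mult_pos_pos)

lemma norm_sat_le: "v_max > 0 \<Longrightarrow> norm (sat v_max z) \<le> v_max"
  by (simp add: sat_def)

lemma norm_v_cv_tilde_le:
  fixes x :: "(real^'d)^'n::finite"
  assumes "0 \<le> \<sigma>2" "0 < \<epsilon>" "0 \<le> r"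
  shows "norm (v_cv_tilde \<sigma>2 \<epsilon> r x i) \<le> \<sigma>2 * (real CARD('n) * r)"
proof -
  let ?J = "{j. j \<noteq> i \<and> norm (x$i - x$j) \<le> r}"
  have term_le: "norm (((r - d) / (d + \<epsilon>)) *\<^sub>R z) \<le> r" if "d = norm z" "d \<le> r" for d and z :: "real^'d"
  proof -
    have pos: "0 < d + \<epsilon>" "0 \<le> r - d"
      using that assms norm_ge_zero[of z] by linarith+
    have "(r - d) * d \<le> r * (d + \<epsilon>)"
      using that assms by (simp add: algebra_simps)
    then have "(r - d) / (d + \<epsilon>) * d \<le> r"
      using pos by (simp add: pos_divide_le_eq)
    then show ?thesis
      using that pos by simp
  qed
  have "norm (\<Sum>j\<in>?J. ((r - norm (x$i - x$j)) / (norm (x$i - x$j) + \<epsilon>)) *\<^sub>R (x$i - x$j))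
      \<le> (\<Sum>j\<in>?J. r)"
    by (intro order_trans[OF norm_sum] sum_mono term_le) auto
  also have "\<dots> \<le> real CARD('n) * r"
    using assms by (simp add: card_mono mult_right_mono)
  finally show ?thesis
    unfolding v_cv_tilde_def using assms by (simp add: mult_left_mono)
qed

lemma norm_v_cv_le:
  fixes x :: "(real^'d)^'n::finite"
  assumes "0 \<le> \<sigma>2" "0 < \<epsilon>" "\<epsilon> < 1" "0 \<le> r"
  shows "norm (v_cv \<beta> \<sigma>1 \<sigma>2 \<epsilon> r q x i) \<le> \<sigma>2 * (real CARD('n) * r)"
proof -
  have "norm (v_cv \<beta> \<sigma>1 \<sigma>2 \<epsilon> r q x i) \<le> norm (v_cv_tilde \<sigma>2 \<epsilon> r x i)"
    unfolding v_cv_def norm_scaleR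
    using kappa2_bounds(1,2)[OF assms(2,3), of "v_ms \<beta> \<sigma>1 q x i" "v_cv_tilde \<sigma>2 \<epsilon> r x i"]
    by (intro mult_left_le_one_le) auto
  then show ?thesis
    using norm_v_cv_tilde_le[OF assms(1,2,4)] by (rule order_trans)
qed

lemma norm_closed_loop_le:
  fixes x :: "(real^'d)^'n::finite"
  assumes "v_max > 0"
  shows "norm (closed_loop \<beta> \<sigma>1 \<sigma>2 \<epsilon> r v_max q x) \<le> real CARD('n) * v_max"
proof -
  have "norm (closed_loop \<beta> \<sigma>1 \<sigma>2 \<epsilon> r v_max q x) \<le> (\<Sum>i\<in>UNIV. norm (closed_loop \<beta> \<sigma>1 \<sigma>2 \<epsilon> r v_max q x $ i))"
    by (rule norm_vec_le_sum_norm_nth)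
  also have "\<dots> \<le> (\<Sum>i\<in>(UNIV::'n set). v_max)"
    using assms by (intro sum_mono) (simp add: closed_loop_def norm_sat_le)
  finally show ?thesis
    by simp
qed

section \<open>The closed loop\<close>

lemma closed_loop_nth_eq:
  "closed_loop \<beta> \<sigma>1 \<sigma>2 \<epsilon> r v_max q x $ i =
    sat_gain v_max (v_ms \<beta> \<sigma>1 q x i + v_cv \<beta> \<sigma>1 \<sigma>2 \<epsilon> r q x i) *\<^sub>R
      (v_ms \<beta> \<sigma>1 q x i + v_cv \<beta> \<sigma>1 \<sigma>2 \<epsilon> r q x i)"
  by (simp add: closed_loop_def sat_eq_scaleR_sat_gain)

context
  fixes \<beta> \<sigma>1 \<sigma>2 \<epsilon> r v_max :: real
  assumes params: "\<beta> > 0" "\<sigma>1 > 0" "\<sigma>2 > 0" "0 < \<epsilon>" "\<epsilon> < 1" "r > 0" "v_max > 0"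
begin

lemma grad_F_inner_closed_loop_le:
  fixes q :: "'k::finite \<Rightarrow> real^'d" and x :: "(real^'d)^'n::finite"
  shows "grad_F \<beta> q x i \<bullet> closed_loop \<beta> \<sigma>1 \<sigma>2 \<epsilon> r v_max q x $ i \<le>
    - (\<sigma>1 * \<epsilon> / (2 * \<beta> * real CARD('k))) *
      sat_gain v_max (v_ms \<beta> \<sigma>1 q x i + v_cv \<beta> \<sigma>1 \<sigma>2 \<epsilon> r q x i) * (norm (grad_F \<beta> q x i))\<^sup>2"
proof -
  define v where "v = v_ms \<beta> \<sigma>1 q x i"
  define u where "u = v_ms \<beta> \<sigma>1 q x i + v_cv \<beta> \<sigma>1 \<sigma>2 \<epsilon> r q x i"
  define s where "s = sat_gain v_max u"
  define a where "a = 2 * \<beta> * ms_weight \<beta> q x i / (real CARD('n) * \<sigma>1)"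
  define m where "m = real CARD('k)"
  have s: "s > 0"
    unfolding s_def using params by (simp add: sat_gain_pos)
  have a: "0 < a" "a \<le> 2 * \<beta> * m / \<sigma>1"
    using params ms_weight_pos[of \<beta> q x i] ms_weight_le[of \<beta> q x i]
    by (auto simp: a_def m_def field_simps)
  have grad: "grad_F \<beta> q x i = (- a) *\<^sub>R v"
    unfolding a_def v_def using grad_F_eq_scaleR_v_ms[OF params(2)] by simp
  have "\<epsilon> * (norm v)\<^sup>2 \<le> v \<bullet> u"
    unfolding u_def v_def v_cv_def by (rule inner_add_kappa2_ge[OF params(4,5)])
  then have "grad_F \<beta> q x i \<bullet> closed_loop \<beta> \<sigma>1 \<sigma>2 \<epsilon> r v_max q x $ i \<le> - (s * \<epsilon>) * (a * (norm v)\<^sup>2)"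
    unfolding closed_loop_nth_eq u_def[symmetric] s_def[symmetric] grad
    using s a by (simp add: mult_left_mono)
  also have "\<dots> \<le> - (s * \<epsilon>) * (\<sigma>1 / (2 * \<beta> * m) * (norm (grad_F \<beta> q x i))\<^sup>2)"
  proof -
    have "\<sigma>1 / (2 * \<beta> * m) * (norm (grad_F \<beta> q x i))\<^sup>2 = (\<sigma>1 / (2 * \<beta> * m) * a) * (a * (norm v)\<^sup>2)"
      unfolding grad using a by (simp add: power2_eq_square)
    also have "\<dots> \<le> a * (norm v)\<^sup>2"
      using a params by (intro mult_left_le_one_le) (auto simp: m_def field_simps)
    finally show ?thesis
      using s params by (intro mult_left_mono_neg) auto
  qed
  finally show ?thesis
    by (simp add: s_def u_def m_def field_simps)
qed

lemma inner_closed_loop_nonpos: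
  fixes q :: "'k::finite \<Rightarrow> real^'d" and x :: "(real^'d)^'n::finite"
  assumes "norm (x$i) \<ge> sample_radius q + real CARD('k) * \<sigma>2 * real CARD('n) * r / \<sigma>1"
  shows "x$i \<bullet> closed_loop \<beta> \<sigma>1 \<sigma>2 \<epsilon> r v_max q x $ i \<le> 0"
proof -
  define m where "m = real CARD('k)"
  define y where "y = norm (x$i)"
  have "x$i \<bullet> v_cv \<beta> \<sigma>1 \<sigma>2 \<epsilon> r q x i \<le> y * (\<sigma>2 * (real CARD('n) * r))"
    unfolding y_def using params
    by (intro order_trans[OF norm_cauchy_schwarz] mult_left_mono norm_v_cv_le) auto
  moreover have "x$i \<bullet> v_ms \<beta> \<sigma>1 q x i \<le> \<sigma>1 / m * ((sample_radius q - y) * y)"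
    unfolding y_def m_def using params by (intro inner_v_ms_le) auto
  moreover have "\<sigma>1 / m * ((sample_radius q - y) * y) + y * (\<sigma>2 * (real CARD('n) * r))
      = \<sigma>1 / m * y * (sample_radius q + m * \<sigma>2 * real CARD('n) * r / \<sigma>1 - y)"
    using params by (simp add: m_def field_simps)
  ultimately have "x$i \<bullet> (v_ms \<beta> \<sigma>1 q x i + v_cv \<beta> \<sigma>1 \<sigma>2 \<epsilon> r q x i)
      \<le> \<sigma>1 / m * y * (sample_radius q + m * \<sigma>2 * real CARD('n) * r / \<sigma>1 - y)"
    by (simp add: inner_add_right)
  also have "\<dots> \<le> 0"
    using assms params unfolding y_def m_def by (intro mult_nonneg_nonpos) auto
  finally have "x$i \<bullet> (v_ms \<beta> \<sigma>1 q x i + v_cv \<beta> \<sigma>1 \<sigma>2 \<epsilon> r q x i) \<le> 0" .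
  then show ?thesis
    unfolding closed_loop_nth_eq inner_scaleR_right
    by (rule mult_nonneg_nonpos[OF less_imp_le[OF sat_gain_pos[OF params(7)]]])
qed

lemma closed_loop_dissipation_on_bounded:
  fixes q :: "'k::finite \<Rightarrow> real^'d"
  assumes "0 \<le> B"
  obtains c where "c > 0" and "\<And>x :: (real^'d)^'n::finite. (\<And>i. norm (x$i) \<le> B) \<Longrightarrow>
    (\<Sum>i\<in>UNIV. grad_F \<beta> q x i \<bullet> closed_loop \<beta> \<sigma>1 \<sigma>2 \<epsilon> r v_max q x $ i)
      \<le> - (c * (\<Sum>i\<in>UNIV. (norm (grad_F \<beta> q x i))\<^sup>2))"
proof
  define U where "U = \<sigma>1 / real CARD('k) * (sample_radius q + B) + \<sigma>2 * (real CARD('n) * r)"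
  define K where "K = \<sigma>1 * \<epsilon> / (2 * \<beta> * real CARD('k))"
  define c where "c = K * min 1 (v_max / U)"
  have U: "U > 0"
    unfolding U_def using params assms sample_radius_nonneg[of q] by (intro add_nonneg_pos) auto
  show "c > 0"
    unfolding c_def K_def using params U by simp
  fix x :: "(real^'d)^'n"
  assume bounded: "\<And>i. norm (x$i) \<le> B"
  have "grad_F \<beta> q x i \<bullet> closed_loop \<beta> \<sigma>1 \<sigma>2 \<epsilon> r v_max q x $ i
      \<le> - (c * (norm (grad_F \<beta> q x i))\<^sup>2)" for i
  proof -
    let ?u = "v_ms \<beta> \<sigma>1 q x i + v_cv \<beta> \<sigma>1 \<sigma>2 \<epsilon> r q x i"
    have "norm ?u \<le> U"
      unfolding U_def using params bounded[of i]
      by (intro order_trans[OF norm_triangle_ineq] add_mono order_trans[OF norm_v_ms_le]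
          mult_left_mono norm_v_cv_le) auto
    then have "min 1 (v_max / U) \<le> sat_gain v_max ?u"
      using params by (intro sat_gain_ge) auto
    then have "c * (norm (grad_F \<beta> q x i))\<^sup>2 \<le> K * sat_gain v_max ?u * (norm (grad_F \<beta> q x i))\<^sup>2"
      unfolding c_def K_def using params by (intro mult_right_mono mult_left_mono) auto
    with grad_F_inner_closed_loop_le[of q x i, folded K_def] show ?thesis
      unfolding mult_minus_left by linarith
  qed
  then show "(\<Sum>i\<in>UNIV. grad_F \<beta> q x i \<bullet> closed_loop \<beta> \<sigma>1 \<sigma>2 \<epsilon> r v_max q x $ i)
      \<le> - (c * (\<Sum>i\<in>UNIV. (norm (grad_F \<beta> q x i))\<^sup>2))"
    unfolding sum_distrib_left sum_negf[symmetric] by (rule sum_mono)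
qed

end

context
  fixes \<beta> \<sigma>1 \<sigma>2 \<epsilon> r v_max t0 :: real and q :: "'k::finite \<Rightarrow> real^'d"
    and p :: "real \<Rightarrow> (real^'d)^'n::finite"
  assumes params: "\<beta> > 0" "\<sigma>1 > 0" "\<sigma>2 > 0" "0 < \<epsilon>" "\<epsilon> < 1" "r > 0" "v_max > 0"
    and solution: "\<forall>t\<ge>t0. (p has_vector_derivative
      closed_loop \<beta> \<sigma>1 \<sigma>2 \<epsilon> r v_max q (p t)) (at t within {t0..})"
begin

lemma solution_has_vector_derivative_at:
  "t0 < t \<Longrightarrow> (p has_vector_derivative closed_loop \<beta> \<sigma>1 \<sigma>2 \<epsilon> r v_max q (p t)) (at t)"
  using solution[rule_format, of t] at_within_interior[of t "{t0..}"] by simp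

lemma solution_lipschitz: "(real CARD('n) * v_max)-lipschitz_on {t0..} p"
proof (rule bounded_derivative_imp_lipschitz)
  fix t assume "t \<in> {t0..}"
  then show "(p has_derivative (\<lambda>h. h *\<^sub>R closed_loop \<beta> \<sigma>1 \<sigma>2 \<epsilon> r v_max q (p t))) (at t within {t0..})"
    using solution by (simp add: has_vector_derivative_def)
  show "onorm (\<lambda>h. h *\<^sub>R closed_loop \<beta> \<sigma>1 \<sigma>2 \<epsilon> r v_max q (p t)) \<le> real CARD('n) * v_max"
    using norm_closed_loop_le[OF params(7)] by (simp add: onorm_scaleR_left[OF bounded_linear_ident] onorm_id)
qed (use params in auto)

lemma solution_continuous: "continuous_on {t0..} p"
  by (rule lipschitz_on_continuous_on[OF solution_lipschitz])

lemma solution_component_bounded: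
  assumes "t0 \<le> t"
  shows "norm (p t $ i) \<le> max (norm (p t0 $ i))
    (sample_radius q + real CARD('k) * \<sigma>2 * real CARD('n) * r / \<sigma>1)"
proof -
  define R where "R = sample_radius q + real CARD('k) * \<sigma>2 * real CARD('n) * r / \<sigma>1"
  have "R \<ge> 0"
    unfolding R_def using params sample_radius_nonneg[of q] by simp
  have "(norm (p t $ i))\<^sup>2 \<le> max ((norm (p t0 $ i))\<^sup>2) (R\<^sup>2)"
  proof (rule le_max_if_DERIV_nonpos_above[OF _ _ _ assms])
    show "continuous_on {t0..} (\<lambda>t. (norm (p t $ i))\<^sup>2)"
      by (intro continuous_intros continuous_on_compose2[OF _ solution_continuous, of UNIV "\<lambda>x. x $ i"]) auto
    fix s assume "t0 < s"
    show "((\<lambda>t. (norm (p t $ i))\<^sup>2) has_real_derivative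
        2 * (p s $ i \<bullet> closed_loop \<beta> \<sigma>1 \<sigma>2 \<epsilon> r v_max q (p s) $ i)) (at s)"
      using has_vector_derivative_comp_has_derivative[OF solution_has_vector_derivative_at[OF \<open>t0 < s\<close>]
          has_derivative_norm_nth_power2] .
    assume "R\<^sup>2 < (norm (p s $ i))\<^sup>2"
    then have "R \<le> norm (p s $ i)"
      using \<open>R \<ge> 0\<close> by (simp add: power_less_imp_less_base less_imp_le)
    then show "2 * (p s $ i \<bullet> closed_loop \<beta> \<sigma>1 \<sigma>2 \<epsilon> r v_max q (p s) $ i) \<le> 0"
      unfolding R_def using inner_closed_loop_nonpos[OF params] by simp
  qed
  then show ?thesis
    using \<open>R \<ge> 0\<close> unfolding R_def[symmetric]
    by (metis abs_norm_cancel max_def norm_ge_zero power2_le_iff_abs_le)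
qed

lemma solution_bounded:
  obtains B where "0 \<le> B" "\<And>t i. t0 \<le> t \<Longrightarrow> norm (p t $ i) \<le> B" "bounded (p ` {t0..})"
proof
  define R where "R = sample_radius q + real CARD('k) * \<sigma>2 * real CARD('n) * r / \<sigma>1"
  define B where "B = norm (p t0) + R"
  have "0 \<le> R"
    unfolding R_def using params sample_radius_nonneg[of q] by simp
  then show "0 \<le> B"
    unfolding B_def by simp
  show component: "norm (p t $ i) \<le> B" if "t0 \<le> t" for t i
    using solution_component_bounded[OF that, of i] Finite_Cartesian_Product.norm_nth_le[of "p t0" i]
      \<open>0 \<le> R\<close>
    unfolding B_def R_def[symmetric] max_def by (auto split: if_splits intro: add_increasing)
  have "norm (p t) \<le> real CARD('n) * B" if "t0 \<le> t" for t
  proof -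
    have "norm (p t) \<le> (\<Sum>i\<in>UNIV. norm (p t $ i))"
      by (rule norm_vec_le_sum_norm_nth)
    also have "\<dots> \<le> (\<Sum>i\<in>(UNIV::'n set). B)"
      using component[OF that] by (intro sum_mono)
    finally show ?thesis
      by simp
  qed
  then show "bounded (p ` {t0..})"
    unfolding bounded_iff by auto
qed

lemma F_err_solution_has_derivative:
  "t0 < t \<Longrightarrow> ((\<lambda>t. F_err \<beta> q (p t)) has_real_derivative
    (\<Sum>i\<in>UNIV. grad_F \<beta> q (p t) i \<bullet> closed_loop \<beta> \<sigma>1 \<sigma>2 \<epsilon> r v_max q (p t) $ i)) (at t)"
  by (rule has_vector_derivative_comp_has_derivative[OF solution_has_vector_derivative_at F_err_has_derivative])

lemma continuous_on_F_err_solution: "continuous_on {t0..} (\<lambda>t. F_err \<beta> q (p t))"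
  using F_err_has_derivative[THEN has_derivative_continuous]
  by (intro continuous_on_compose2[OF _ solution_continuous, of UNIV] continuous_at_imp_continuous_on) auto

end

theorem theorem3:
  fixes q :: "'k::finite \<Rightarrow> real^'d"
    and p :: "real \<Rightarrow> (real^'d)^'n::finite"
    and \<beta> \<sigma>1 \<sigma>2 \<epsilon> r_avoid v_max t0 :: real
  assumes "CARD('n) \<ge> 2"
    and "\<beta> > 0" "\<sigma>1 > 0" "\<sigma>2 > 0" "0 < \<epsilon>" "\<epsilon> < 1" "r_avoid > 0" "v_max > 0"
    and sol: "\<forall>t\<ge>t0. (p has_vector_derivative
               closed_loop \<beta> \<sigma>1 \<sigma>2 \<epsilon> r_avoid v_max q (p t)) (at t within {t0..})"
  shows "\<forall>e>0. \<forall>\<^sub>F t in at_top. \<exists>x\<in>crit_set \<beta> q. dist (p t) x < e"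
proof (intro allI impI)
  note params = assms(2-8)
  fix e :: real
  assume "0 < e"
  obtain B where B: "0 \<le> B" "\<And>t i. t0 \<le> t \<Longrightarrow> norm (p t $ i) \<le> B" "bounded (p ` {t0..})"
    using solution_bounded[OF params sol] by blast
  obtain c where c: "0 < c" "\<And>x :: (real^'d)^'n. (\<And>i. norm (x$i) \<le> B) \<Longrightarrow>
      (\<Sum>i\<in>UNIV. grad_F \<beta> q x i \<bullet> closed_loop \<beta> \<sigma>1 \<sigma>2 \<epsilon> r_avoid v_max q x $ i)
        \<le> - (c * (\<Sum>i\<in>UNIV. (norm (grad_F \<beta> q x i))\<^sup>2))"
    using closed_loop_dissipation_on_bounded[OF params B(1)] by blast
  have "\<forall>\<^sub>F t in at_top. \<exists>x. c * (\<Sum>i\<in>UNIV. (norm (grad_F \<beta> q x i))\<^sup>2) = 0 \<and> dist (p t) x < e"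
  proof (rule eventually_near_zeros_of_dissipation[OF solution_lipschitz[OF params sol] B(3)
        continuous_on_F_err_solution[OF params sol] F_err_solution_has_derivative[OF params sol]])
    show "bdd_below ((\<lambda>t. F_err \<beta> q (p t)) ` {t0..})"
      using F_err_lower_bound[OF less_imp_le[OF params(1)], of q] by (intro bdd_belowI2) auto
    show "continuous_on UNIV (\<lambda>x. c * (\<Sum>i\<in>UNIV. (norm (grad_F \<beta> q x i))\<^sup>2))"
      by (intro continuous_at_imp_continuous_on ballI continuous_intros continuous_grad_F)
    show "(\<Sum>i\<in>UNIV. grad_F \<beta> q (p t) i \<bullet> closed_loop \<beta> \<sigma>1 \<sigma>2 \<epsilon> r_avoid v_max q (p t) $ i)
        \<le> - (c * (\<Sum>i\<in>UNIV. (norm (grad_F \<beta> q (p t) i))\<^sup>2))" if "t0 < t" for t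
      using that by (intro c(2) B(2)) simp
  qed (use c(1) \<open>0 < e\<close> in \<open>simp_all add: sum_nonneg\<close>)
  then show "\<forall>\<^sub>F t in at_top. \<exists>x\<in>crit_set \<beta> q. dist (p t) x < e"
    by eventually_elim (use c(1) in \<open>auto intro!: grad_F_zero_imp_crit_set simp: sum_nonneg_eq_0_iff\<close>)
qed

end
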